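(* Let $f,a_1,p,d_1\in\mathbb{C}$ with $\mathrm{Re}(f-2a_1-2d_1-1)>0$, such that the series below is well defined (no lower parameter is a nonpositive integer), $a_1\ne0$, and the quantities below are defined and $k$ is not a nonpositive integer. Put $$h=\frac{p(f-p-1)}{a_1},\qquad k=\frac{h(1+d_1+a_1-f)(\frac12+a_1-\frac12 f)}{d_1(\frac12 f-\frac12)-h(\frac12+d_1+a_1-\frac12 f)}.$$ Then $$ {}_{5}F_{4}\left[\begin{matrix} f-1,\ a_1,\ f-p,\ p+1,\ d_1\\ f-a_1,\ p,\ f-p-1,\ f-d_1\end{matrix};1\right]=\frac{\Gamma(f-d_1)\Gamma(\frac12 f+\frac12)\Gamma(f-a_1)\Gamma(\frac12 f-a_1-d_1-\frac12)}{\Gamma(f)\Gamma(\frac12 f-d_1+\frac12)\Gamma(f-a_1-d_1-1)\Gamma(\frac12 f-a_1-\frac12)}\cdot\frac{\Gamma(k)}{\Gamma(k+1)}.$$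
   Context: $(x)_n$ denotes the Pochhammer symbol: $(x)_0=1$, $(x)_n=x(x+1)\cdots(x+n-1)$ for $n\ge1$. The generalized hypergeometric function is $${}_{r+1}F_{r}\left[\begin{matrix} a_1,\dots,a_{r+1}\\ b_1,\dots,b_r\end{matrix};z\right]=\sum_{n=0}^{\infty}\frac{(a_1)_n\cdots(a_{r+1})_n}{(b_1)_n\cdots(b_r)_n\,n!}z^n ,$$ where no $b_i$ is a nonpositive integer. $\Gamma$ is Euler's gamma function. *)

theory Defs
  imports "HOL-Analysis.Analysis"
begin

definition hypergeom :: "complex list \<Rightarrow> complex list \<Rightarrow> complex \<Rightarrow> complex" where
  "hypergeom as bs z =
     (\<Sum>n. (\<Prod>a\<leftarrow>as. pochhammer a n) / ((\<Prod>b\<leftarrow>bs. pochhammer b n) * fact n) * z ^ n)"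

end

theory Submission
  imports Defs "HOL-Real_Asymp.Real_Asymp"
begin

(*
  With A = f - 1 and q = f - p - 1 one has (p + 1)_n (q + 1)_n / ((p)_n (q)_n) = 1 + n (n + A) / (p q),
  so the 5F4 splits into the well-poised 3F2 with parameters A, a1, d1 plus, after shifting the
  summation index by one, a multiple of the well-poised 3F2 with parameters A + 2, a1 + 1, d1 + 1.
  Both are summed by Dixon's theorem, and k is exactly the quantity that makes the two Gamma
  expressions combine into one.

  Dixon's theorem is proved directly: a creative-telescoping certificate gives the contiguous relation
  S(a) = R(a) S(a + 2) for the well-poised sum S(a).  Iterating it, the product of the R(a + 2j) is a
  ratio of Pochhammer symbols, which tends to a ratio of Gamma values by Euler's limit formula, while
  S(a + 2N) tends to 1 by Tannery's theorem.  Legendre's duplication formula gives the classical form.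
*)

lemma plus_of_nat_notin_nonpos_Ints:
  fixes x :: complex
  assumes "x \<notin> \<int>\<^sub>\<le>\<^sub>0"
  shows "x + of_nat k \<notin> \<int>\<^sub>\<le>\<^sub>0"
proof
  assume "x + of_nat k \<in> \<int>\<^sub>\<le>\<^sub>0"
  hence "x + of_nat k - of_nat k \<in> \<int>\<^sub>\<le>\<^sub>0" by (rule nonpos_Ints_diff_Nats) simp
  with assms show False by simp
qed

lemma plus_of_nat_neq_0: "x \<notin> \<int>\<^sub>\<le>\<^sub>0 \<Longrightarrow> x + of_nat k \<noteq> (0::complex)"
  using plus_of_nat_eq_0_imp by blast

lemma pochhammer_neq_0: "x \<notin> \<int>\<^sub>\<le>\<^sub>0 \<Longrightarrow> pochhammer x n \<noteq> (0::complex)"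
  using pochhammer_eq_0_imp_nonpos_Int by blast

lemma Re_pos_notin_nonpos_Ints: "Re z > 0 \<Longrightarrow> z \<notin> \<int>\<^sub>\<le>\<^sub>0"
  by (auto elim!: nonpos_Ints_cases')

lemma half_notin_nonpos_Ints:
  fixes z :: complex
  assumes "z \<notin> \<int>\<^sub>\<le>\<^sub>0"
  shows "z / 2 \<notin> \<int>\<^sub>\<le>\<^sub>0" and "(z + 1) / 2 \<notin> \<int>\<^sub>\<le>\<^sub>0"
proof -
  show "z / 2 \<notin> \<int>\<^sub>\<le>\<^sub>0"
  proof
    assume "z / 2 \<in> \<int>\<^sub>\<le>\<^sub>0"
    then obtain m where "z / 2 = - of_nat m" by (elim nonpos_Ints_cases')
    hence "z = - of_nat (2 * m)" by (simp add: field_simps)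
    with assms show False by (metis minus_of_nat_in_nonpos_Ints)
  qed
  show "(z + 1) / 2 \<notin> \<int>\<^sub>\<le>\<^sub>0"
  proof
    assume "(z + 1) / 2 \<in> \<int>\<^sub>\<le>\<^sub>0"
    then obtain m where "(z + 1) / 2 = - of_nat m" by (elim nonpos_Ints_cases')
    hence "z = - of_nat (2 * m + 1)" by (simp add: field_simps) algebra
    with assms show False by (metis minus_of_nat_in_nonpos_Ints)
  qed
qed

lemma Gamma_eq_Gamma_plus1_div:
  fixes z w :: complex
  assumes "w = z + 1"
  shows "Gamma z = Gamma w / z"
proof (cases "z \<in> \<int>\<^sub>\<le>\<^sub>0")
  case True
  then obtain m where m: "z = - of_nat m" by (elim nonpos_Ints_cases')
  show ?thesis
  proof (cases m)
    case (Suc j)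
    hence "w = - of_nat j" using m assms by simp
    thus ?thesis using True by (simp add: Gamma_eq_zero_iff)
  qed (use m in simp)
next
  case False
  thus ?thesis using Gamma_plus1[OF False] assms by (auto simp: field_simps)
qed

lemma Gamma_plus1_eq:
  fixes z w :: complex
  assumes "w = z + 1" "z \<noteq> 0"
  shows "Gamma w = z * Gamma z"
  using Gamma_eq_Gamma_plus1_div[OF assms(1)] assms(2) by (simp add: field_simps)

lemma Gamma_eq_Gamma_plus2_div: "Gamma z = Gamma (z + 2) / (z * (z + 1))" for z :: complex
proof -
  have "Gamma z = Gamma (z + 1) / z" "Gamma (z + 1) = Gamma (z + 2) / (z + 1)"
    by (rule Gamma_eq_Gamma_plus1_div; simp)+
  thus ?thesis by simp
qed

lemma Gamma_legendre_duplication':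
  fixes w :: complex
  shows "Gamma (w / 2) * Gamma ((w + 1) / 2) = exp ((1 - w) * of_real (ln 2)) * of_real (sqrt pi) * Gamma w"
proof (cases "w \<in> \<int>\<^sub>\<le>\<^sub>0")
  case False
  hence "w / 2 \<notin> \<int>\<^sub>\<le>\<^sub>0" "w / 2 + 1 / 2 \<notin> \<int>\<^sub>\<le>\<^sub>0"
    using half_notin_nonpos_Ints[OF False] by (simp_all add: add_divide_distrib)
  from Gamma_legendre_duplication[OF this] show ?thesis by (simp add: add_divide_distrib)
next
  case True
  hence "Gamma w = 0" by (simp add: Gamma_eq_zero_iff)
  moreover have "w / 2 \<in> \<int>\<^sub>\<le>\<^sub>0 \<or> (w + 1) / 2 \<in> \<int>\<^sub>\<le>\<^sub>0"
  proof -
    from True obtain m where m: "w = - of_nat m" by (elim nonpos_Ints_cases')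
    consider j where "m = 2 * j" | j where "m = 2 * j + 1" by (metis oddE evenE)
    thus ?thesis
    proof cases
      case 1 thus ?thesis using m by (auto simp: field_simps)
    next
      case 2
      hence "w = - (2 * of_nat j + 1)" using m by simp
      hence "(w + 1) / 2 = - of_nat j" by simp
      thus ?thesis by simp
    qed
  qed
  ultimately show ?thesis by (auto simp: Gamma_nonpos_Int)
qed

section \<open>Euler's limit and the size of 3F2 terms\<close>

definition rGamma_pochhammer_seq :: "complex \<Rightarrow> nat \<Rightarrow> complex" where
  "rGamma_pochhammer_seq z n = pochhammer z n / (fact n * of_nat n powr (z - 1))"

lemma rGamma_pochhammer_seq_LIMSEQ: "rGamma_pochhammer_seq z \<longlonglongrightarrow> rGamma z"
proof -
  have "(\<lambda>n. of_nat n / (z + of_nat n)) \<longlonglongrightarrow> (1 :: complex)"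
  proof -
    have "(\<lambda>n. 1 / (z * (1 / of_nat n) + 1) :: complex) \<longlonglongrightarrow> 1 / (z * 0 + 1)"
      by (intro tendsto_intros lim_1_over_n) simp
    moreover have "\<forall>\<^sub>F n in sequentially. 1 / (z * (1 / of_nat n) + 1) = of_nat n / (z + of_nat n)"
      using eventually_gt_at_top[of 0] by eventually_elim (simp add: field_simps)
    ultimately show ?thesis by (simp add: tendsto_cong)
  qed
  hence "(\<lambda>n. rGamma_series z n * (of_nat n / (z + of_nat n))) \<longlonglongrightarrow> rGamma z * 1"
    by (intro tendsto_intros)
  moreover have "\<forall>\<^sub>F n in sequentially. rGamma_series z n * (of_nat n / (z + of_nat n)) =
      pochhammer z n / (fact n * of_nat n powr (z - 1))"
    using eventually_gt_at_top[of "nat \<lceil>norm z\<rceil>"]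
  proof eventually_elim
    case (elim n)
    have "z + of_nat n \<noteq> 0"
    proof
      assume "z + of_nat n = 0"
      hence "z = - of_nat n" by (simp add: add_eq_0_iff)
      hence "norm z = real n" by simp
      with elim show False by linarith
    qed
    define P where "P = (of_nat n powr (z - 1) :: complex)"
    have "exp (z * of_real (ln (real n))) = of_nat n powr z"
      using elim by (simp add: powr_def)
    also have "\<dots> = of_nat n * P"
      unfolding P_def using powr_add[of "of_nat n :: complex" 1 "z - 1"] by simp
    finally have "rGamma_series z n = pochhammer z n * (z + of_nat n) / (fact n * (of_nat n * P))"
      by (simp add: rGamma_series_def pochhammer_Suc)
    moreover have "P \<noteq> 0" "of_nat n \<noteq> (0 :: complex)" using elim by (simp_all add: P_def powr_def)
    ultimately show ?case using \<open>z + of_nat n \<noteq> 0\<close> by (simp add: P_def[symmetric])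
  qed
  ultimately show ?thesis by (simp add: tendsto_cong rGamma_pochhammer_seq_def[abs_def])
qed

lemma pochhammer_prod_ratio:
  fixes as bs :: "complex list"
  assumes "length as = length bs" and "n > 0"
  shows "(\<Prod>a\<leftarrow>as. pochhammer a n) / (\<Prod>b\<leftarrow>bs. pochhammer b n) =
    (\<Prod>a\<leftarrow>as. rGamma_pochhammer_seq a n) / (\<Prod>b\<leftarrow>bs. rGamma_pochhammer_seq b n) *
    of_nat n powr (sum_list as - sum_list bs)"
  using assms(1)
proof (induction as bs rule: list_induct2)
  case (Cons a as b bs)
  let ?r = rGamma_pochhammer_seq
  define E where "E z = (of_nat n powr z :: complex)" for z
  define \<sigma> where "\<sigma> = sum_list as - sum_list bs"
  have E_add: "E (x + y) = E x * E y" for x y unfolding E_def by (rule powr_add)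
  have E_nz: "E z \<noteq> 0" for z using assms(2) by (simp add: E_def powr_def)
  have E_shift: "E (a + sum_list as - (b + sum_list bs)) * E (b - 1) = E (a - 1) * E \<sigma>"
    unfolding E_add[symmetric] \<sigma>_def by (simp add: algebra_simps)
  have r_ratio: "?r a n / ?r b n * E (a + sum_list as - (b + sum_list bs)) =
      pochhammer a n / pochhammer b n * E \<sigma>"
  proof (cases "pochhammer b n = 0")
    case False
    thus ?thesis using E_shift E_nz
      by (simp add: rGamma_pochhammer_seq_def E_def[symmetric] field_simps)
  qed (simp add: rGamma_pochhammer_seq_def)
  have "(\<Prod>x\<leftarrow>a # as. ?r x n) / (\<Prod>x\<leftarrow>b # bs. ?r x n) * E (sum_list (a # as) - sum_list (b # bs)) =
      (?r a n / ?r b n * E (a + sum_list as - (b + sum_list bs))) *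
      ((\<Prod>x\<leftarrow>as. ?r x n) / (\<Prod>x\<leftarrow>bs. ?r x n))"
    by (simp add: mult_ac)
  also have "\<dots> = pochhammer a n / pochhammer b n *
      ((\<Prod>x\<leftarrow>as. ?r x n) / (\<Prod>x\<leftarrow>bs. ?r x n) * E \<sigma>)"
    unfolding r_ratio by (simp add: mult_ac)
  also have "\<dots> = (\<Prod>x\<leftarrow>a # as. pochhammer x n) / (\<Prod>x\<leftarrow>b # bs. pochhammer x n)"
    unfolding E_def \<sigma>_def Cons.IH[symmetric] by (simp add: times_divide_times_eq)
  finally show ?case unfolding E_def ..
qed (use assms(2) in simp)

definition hyp32_term :: "'a \<Rightarrow> 'a \<Rightarrow> 'a \<Rightarrow> 'a \<Rightarrow> 'a \<Rightarrow> nat \<Rightarrow> 'a :: field_char_0" where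
  "hyp32_term a1 a2 a3 b1 b2 n =
     pochhammer a1 n * pochhammer a2 n * pochhammer a3 n / (pochhammer b1 n * pochhammer b2 n * fact n)"

lemma hypergeom_3_2_eq_suminf:
  "hypergeom [a1, a2, a3] [b1, b2] 1 = (\<Sum>n. hyp32_term a1 a2 a3 b1 b2 n)"
  unfolding hypergeom_def hyp32_term_def by (simp add: mult.assoc)

lemma hyp32_term_of_real:
  "hyp32_term (of_real a1) (of_real a2) (of_real a3) (of_real b1) (of_real b2) n =
     (of_real (hyp32_term a1 a2 a3 b1 b2 n) :: complex)"
  by (simp add: hyp32_term_def pochhammer_of_real)

lemma hyp32_term_bound:
  fixes a1 a2 a3 b1 b2 :: complex
  assumes "b1 \<notin> \<int>\<^sub>\<le>\<^sub>0" "b2 \<notin> \<int>\<^sub>\<le>\<^sub>0"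
  obtains K where "K > 0" and "\<And>n. n > 0 \<Longrightarrow>
    norm (hyp32_term a1 a2 a3 b1 b2 n) \<le> K * real n powr (- (Re (b1 + b2 - a1 - a2 - a3) + 1))"
proof -
  define \<sigma> where "\<sigma> = b1 + b2 - a1 - a2 - a3"
  let ?r = rGamma_pochhammer_seq
  define R where "R n = ?r a1 n * ?r a2 n * ?r a3 n / (?r b1 n * ?r b2 n * ?r 1 n)" for n
  have R: "hyp32_term a1 a2 a3 b1 b2 n = R n * of_nat n powr (- (\<sigma> + 1))" if "n > 0" for n
    using pochhammer_prod_ratio[of "[a1, a2, a3]" "[b1, b2, 1]" n] that
    by (simp add: hyp32_term_def R_def \<sigma>_def pochhammer_fact mult.assoc algebra_simps)
  have "R \<longlonglongrightarrow> rGamma a1 * rGamma a2 * rGamma a3 / (rGamma b1 * rGamma b2 * rGamma 1)"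
    unfolding R_def[abs_def] using assms
    by (intro tendsto_intros rGamma_pochhammer_seq_LIMSEQ) (auto simp: rGamma_eq_zero_iff)
  then obtain K where K: "K > 0" "\<And>n. norm (R n) \<le> K"
    using convergent_imp_Bseq BseqE convergentI by metis
  show ?thesis
  proof (rule that[OF K(1)])
    fix n :: nat assume n: "n > 0"
    have "norm (hyp32_term a1 a2 a3 b1 b2 n) = norm (R n) * real n powr (- (Re \<sigma> + 1))"
      using n by (simp add: R norm_mult norm_powr_real_powr)
    also have "\<dots> \<le> K * real n powr (- (Re \<sigma> + 1))"
      using K(2) by (rule mult_right_mono) simp
    finally show "norm (hyp32_term a1 a2 a3 b1 b2 n) \<le> K * real n powr (- (Re (b1 + b2 - a1 - a2 - a3) + 1))"
      unfolding \<sigma>_def .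
  qed
qed

lemma summable_norm_hyp32_term:
  fixes a1 a2 a3 b1 b2 :: complex
  assumes "b1 \<notin> \<int>\<^sub>\<le>\<^sub>0" "b2 \<notin> \<int>\<^sub>\<le>\<^sub>0" "Re (b1 + b2 - a1 - a2 - a3) > 0"
  shows "summable (\<lambda>n. norm (hyp32_term a1 a2 a3 b1 b2 n))"
proof -
  obtain K where K: "K > 0" "\<And>n. n > 0 \<Longrightarrow>
      norm (hyp32_term a1 a2 a3 b1 b2 n) \<le> K * real n powr (- (Re (b1 + b2 - a1 - a2 - a3) + 1))"
    using hyp32_term_bound[OF assms(1,2)] by blast
  have "summable (\<lambda>n. K * real n powr (- (Re (b1 + b2 - a1 - a2 - a3) + 1)))"
    using assms(3) by (intro summable_mult) (simp add: summable_real_powr_iff)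
  moreover have "\<forall>\<^sub>F n in sequentially. norm (norm (hyp32_term a1 a2 a3 b1 b2 n)) \<le>
      K * real n powr (- (Re (b1 + b2 - a1 - a2 - a3) + 1))"
    using eventually_gt_at_top[of 0] by eventually_elim (use K in auto)
  ultimately show ?thesis by (rule summable_comparison_test_ev[rotated])
qed

lemma hyp32_term_times_n_LIMSEQ:
  fixes a1 a2 a3 b1 b2 :: complex
  assumes "b1 \<notin> \<int>\<^sub>\<le>\<^sub>0" "b2 \<notin> \<int>\<^sub>\<le>\<^sub>0" "Re (b1 + b2 - a1 - a2 - a3) > 0"
  shows "(\<lambda>n. of_nat n * hyp32_term a1 a2 a3 b1 b2 n) \<longlonglongrightarrow> 0"
proof -
  define \<sigma> where "\<sigma> = Re (b1 + b2 - a1 - a2 - a3)"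
  obtain K where K: "K > 0" "\<And>n. n > 0 \<Longrightarrow> norm (hyp32_term a1 a2 a3 b1 b2 n) \<le> K * real n powr (- (\<sigma> + 1))"
    using hyp32_term_bound[OF assms(1,2)] unfolding \<sigma>_def by blast
  have "(\<lambda>n. K * real n powr (- \<sigma>)) \<longlonglongrightarrow> 0"
    using assms(3) unfolding \<sigma>_def
    by (intro tendsto_mult_right_zero tendsto_neg_powr filterlim_real_sequentially) auto
  moreover have "\<forall>\<^sub>F n in sequentially. norm (of_nat n * hyp32_term a1 a2 a3 b1 b2 n) \<le> K * real n powr (- \<sigma>)"
    using eventually_gt_at_top[of 0]
  proof eventually_elim
    case (elim n)
    have "norm (of_nat n * hyp32_term a1 a2 a3 b1 b2 n) \<le> real n * (K * real n powr (- (\<sigma> + 1)))"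
      using K(2)[OF elim] unfolding norm_mult norm_of_nat by (rule mult_left_mono) simp
    also have "\<dots> = K * (real n powr 1 * real n powr (- (\<sigma> + 1)))"
      using elim by simp
    also have "\<dots> = K * real n powr (- \<sigma>)"
      unfolding powr_add[symmetric] by simp
    finally show ?case .
  qed
  ultimately show ?thesis by (rule Lim_null_comparison[rotated])
qed

section \<open>A contiguous relation for the well-poised 3F2\<close>

definition dixon_term :: "complex \<Rightarrow> complex \<Rightarrow> complex \<Rightarrow> nat \<Rightarrow> complex" where
  "dixon_term a b c = hyp32_term a b c (1 + a - b) (1 + a - c)"

lemma hypergeom_well_poised_eq_suminf:
  "hypergeom [a, b, c] [1 + a - b, 1 + a - c] 1 = (\<Sum>n. dixon_term a b c n)"
  unfolding dixon_term_def by (rule hypergeom_3_2_eq_suminf)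

lemma summable_dixon_term:
  assumes "1 + a - b \<notin> \<int>\<^sub>\<le>\<^sub>0" "1 + a - c \<notin> \<int>\<^sub>\<le>\<^sub>0" "Re (a + 2 - 2 * b - 2 * c) > 0"
  shows "summable (dixon_term a b c)"
proof -
  have "Re ((1 + a - b) + (1 + a - c) - a - b - c) > 0" using assms(3) by simp
  from summable_norm_hyp32_term[OF assms(1,2) this] show ?thesis
    unfolding dixon_term_def by (rule summable_norm_cancel)
qed

lemma dixon_term_Suc:
  "dixon_term a b c (Suc n) = dixon_term a b c n *
     ((a + of_nat n) * (b + of_nat n) * (c + of_nat n) /
      ((1 + a - b + of_nat n) * (1 + a - c + of_nat n) * of_nat (Suc n)))"
  unfolding dixon_term_def hyp32_term_def pochhammer_Suc fact_Suc of_nat_mult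
  by (simp add: mult_ac)

lemma pochhammer_plus2:
  fixes z :: complex
  shows "pochhammer z (Suc (Suc n)) = z * (z + 1) * pochhammer (z + 2) n"
    and "pochhammer z (Suc (Suc n)) = pochhammer z n * (z + of_nat n) * (z + of_nat n + 1)"
  by (simp only: pochhammer_rec, simp add: algebra_simps) (simp only: pochhammer_Suc, simp add: algebra_simps)

lemma dixon_term_plus2:
  assumes "a \<noteq> 0" and "1 + a - b \<notin> \<int>\<^sub>\<le>\<^sub>0" "1 + a - c \<notin> \<int>\<^sub>\<le>\<^sub>0"
  shows "(1 + a) * dixon_term (a + 2) b c n = dixon_term a b c n *
    ((a + of_nat n) * (a + of_nat n + 1) * ((1 + a - b) * (2 + a - b) * (1 + a - c) * (2 + a - c)) /
     (a * ((1 + a - b + of_nat n) * (2 + a - b + of_nat n) * (1 + a - c + of_nat n) * (2 + a - c + of_nat n))))"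
proof -
  define x where "x = (of_nat n :: complex)"
  define lb where "lb = 1 + a - b"
  define lc where "lc = 1 + a - c"
  have nz: "lb \<noteq> 0" "lb + 1 \<noteq> 0" "lc \<noteq> 0" "lc + 1 \<noteq> 0" "lb + x \<noteq> 0" "lb + x + 1 \<noteq> 0"
    "lc + x \<noteq> 0" "lc + x + 1 \<noteq> 0" "pochhammer lb n \<noteq> 0" "pochhammer lc n \<noteq> 0"
    using plus_of_nat_neq_0[OF assms(2), of 0] plus_of_nat_neq_0[OF assms(2), of 1]
      plus_of_nat_neq_0[OF assms(3), of 0] plus_of_nat_neq_0[OF assms(3), of 1]
      plus_of_nat_neq_0[OF assms(2), of n] plus_of_nat_neq_0[OF assms(2), of "Suc n"]
      plus_of_nat_neq_0[OF assms(3), of n] plus_of_nat_neq_0[OF assms(3), of "Suc n"]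
      pochhammer_neq_0[OF assms(2)] pochhammer_neq_0[OF assms(3)]
    unfolding lb_def lc_def x_def by (simp_all add: algebra_simps)
  have shift: "pochhammer (z + 2) n = pochhammer z n * (z + x) * (z + x + 1) / (z * (z + 1))"
    if "z \<noteq> 0" "z + 1 \<noteq> 0" for z
  proof -
    have "z * (z + 1) * pochhammer (z + 2) n = pochhammer z n * (z + x) * (z + x + 1)"
      using pochhammer_plus2[of z n] unfolding x_def by simp
    thus ?thesis using that by (simp add: eq_divide_eq mult_ac)
  qed
  have pa: "(1 + a) * pochhammer (a + 2) n = pochhammer a n * (a + x) * (a + x + 1) / a"
    using pochhammer_plus2[of a n] assms(1) unfolding x_def by (simp add: field_simps)
  have lower: "1 + (a + 2) - b = lb + 2" "1 + (a + 2) - c = lc + 2"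
    unfolding lb_def lc_def by simp_all
  have "(1 + a) * dixon_term (a + 2) b c n =
      (pochhammer a n * (a + x) * (a + x + 1) / a) * pochhammer b n * pochhammer c n /
      ((pochhammer lb n * (lb + x) * (lb + x + 1) / (lb * (lb + 1))) *
       (pochhammer lc n * (lc + x) * (lc + x + 1) / (lc * (lc + 1))) * fact n)"
    unfolding dixon_term_def hyp32_term_def lower shift[OF nz(1,2)] shift[OF nz(3,4)] pa[symmetric]
    by (simp add: mult.assoc)
  also have "\<dots> = dixon_term a b c n *
      ((a + x) * (a + x + 1) * (lb * (lb + 1) * lc * (lc + 1)) /
       (a * ((lb + x) * (lb + x + 1) * (lc + x) * (lc + x + 1))))"
    unfolding dixon_term_def hyp32_term_def lb_def[symmetric] lc_def[symmetric]
    using nz assms(1) by (simp add: field_simps)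
  finally show ?thesis unfolding x_def lb_def lc_def by (simp add: algebra_simps)
qed

(* Found by Zeilberger's algorithm for the shift a \<mapsto> a + 2; dixon_cert is the resulting certificate. *)
definition dixon_cert_poly :: "complex \<Rightarrow> complex \<Rightarrow> complex \<Rightarrow> complex \<Rightarrow> complex" where
  "dixon_cert_poly a b c x = a * x\<^sup>2 + a * (3 + 3 * a - 2 * b - 2 * c) * x +
     (2 * a^3 + 3 * a\<^sup>2 - 2 * a\<^sup>2 * b - 2 * a\<^sup>2 * c - a + a * c + a * b - a * b * c - 2 + 4 * c - 2 * c\<^sup>2
      + 4 * b - 6 * b * c + 2 * b * c\<^sup>2 - 2 * b\<^sup>2 + 2 * b\<^sup>2 * c)"

definition dixon_ratio :: "complex \<Rightarrow> complex \<Rightarrow> complex \<Rightarrow> complex" where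
  "dixon_ratio a b c = (1 + a) * ((2 + a - 2 * b) * (2 + a - 2 * c) * (1 + a - b - c) * (2 + a - b - c)) /
      ((1 + a - b) * (2 + a - b) * (1 + a - c) * (2 + a - c) * (a + 2 - 2 * b - 2 * c))"

definition dixon_cert :: "complex \<Rightarrow> complex \<Rightarrow> complex \<Rightarrow> nat \<Rightarrow> complex" where
  "dixon_cert a b c n = dixon_term a b c n *
     (of_nat n * (dixon_cert_poly a b c (of_nat n) / (a * (a + 2 - 2 * b - 2 * c))) /
      ((1 + a - b + of_nat n) * (1 + a - c + of_nat n)))"

lemma dixon_cert_poly_identity:
  "dixon_cert_poly a b c (x + 1) * ((a + x) * (b + x) * (c + x))
     - dixon_cert_poly a b c x * (x * (2 + a - b + x) * (2 + a - c + x))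
     - (2 + a - 2 * b) * (2 + a - 2 * c) * (1 + a - b - c) * (2 + a - b - c) * ((a + x) * (a + x + 1))
     + a * (a + 2 - 2 * b - 2 * c) * ((1 + a - b + x) * (2 + a - b + x) * (1 + a - c + x) * (2 + a - c + x))
   = 0"
  unfolding dixon_cert_poly_def by algebra

lemma dixon_cert_rational_identity:
  fixes a b c x :: complex
  defines "P1 \<equiv> 1 + a - b + x" and "P2 \<equiv> 1 + a - c + x" and "P4 \<equiv> 2 + a - b + x" and "P5 \<equiv> 2 + a - c + x"
    and "L \<equiv> (1 + a - b) * (2 + a - b) * (1 + a - c) * (2 + a - c)" and "S \<equiv> a + 2 - 2 * b - 2 * c"
    and "C \<equiv> (2 + a - 2 * b) * (2 + a - 2 * c) * (1 + a - b - c) * (2 + a - b - c)"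
  assumes "a \<noteq> 0" "S \<noteq> 0" "L \<noteq> 0" "P1 \<noteq> 0" "P2 \<noteq> 0" "P4 \<noteq> 0" "P5 \<noteq> 0" "x + 1 \<noteq> 0"
  shows "(a + x) * (b + x) * (c + x) / (P1 * P2 * (x + 1)) *
      ((x + 1) * (dixon_cert_poly a b c (x + 1) / (a * S)) / (P4 * P5)) =
    x * (dixon_cert_poly a b c x / (a * S)) / (P1 * P2) +
      (a + x) * (a + x + 1) * L / (a * (P1 * P4 * P2 * P5)) * (C / (L * S)) - 1"
proof -
  define X1 where "X1 = x + 1"
  define N0 where "N0 = dixon_cert_poly a b c x"
  define N1 where "N1 = dixon_cert_poly a b c X1"
  define U where "U = (a + x) * (b + x) * (c + x)"
  define V where "V = (a + x) * (a + x + 1)"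
  have "N1 * U - N0 * (x * P4 * P5) - C * V + a * S * (P1 * P4 * P2 * P5) = 0"
    unfolding N1_def X1_def U_def N0_def P4_def P5_def C_def V_def S_def P1_def P2_def
    by (rule dixon_cert_poly_identity)
  moreover have "U / (P1 * P2 * X1) * (X1 * (N1 / (a * S)) / (P4 * P5)) -
      (x * (N0 / (a * S)) / (P1 * P2) + V * L / (a * (P1 * P4 * P2 * P5)) * (C / (L * S)) - 1) =
      (N1 * U - N0 * (x * P4 * P5) - C * V + a * S * (P1 * P4 * P2 * P5)) / (a * S * (P1 * P4 * P2 * P5))"
    using assms(8-) unfolding X1_def[symmetric] by (simp add: field_simps)
  ultimately show ?thesis unfolding X1_def[symmetric] N0_def[symmetric] N1_def[symmetric]
    U_def[symmetric] V_def[symmetric] by simp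
qed

lemma dixon_cert_diff:
  assumes "a \<noteq> 0" and l: "1 + a - b \<notin> \<int>\<^sub>\<le>\<^sub>0" "1 + a - c \<notin> \<int>\<^sub>\<le>\<^sub>0"
    and "a + 2 - 2 * b - 2 * c \<noteq> 0"
  shows "dixon_cert a b c (Suc n) - dixon_cert a b c n =
    dixon_ratio a b c * dixon_term (a + 2) b c n - dixon_term a b c n"
proof -
  define x where "x = (of_nat n :: complex)"
  define P1 where "P1 = 1 + a - b + x"
  define P2 where "P2 = 1 + a - c + x"
  define P4 where "P4 = 2 + a - b + x"
  define P5 where "P5 = 2 + a - c + x"
  define L where "L = (1 + a - b) * (2 + a - b) * (1 + a - c) * (2 + a - c)"
  define S where "S = a + 2 - 2 * b - 2 * c"
  define C where "C = (2 + a - 2 * b) * (2 + a - 2 * c) * (1 + a - b - c) * (2 + a - b - c)"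
  have lower_nz: "1 + a - b + of_nat k \<noteq> 0" "1 + a - c + of_nat k \<noteq> 0" for k
    using plus_of_nat_neq_0[OF l(1)] plus_of_nat_neq_0[OF l(2)] by auto
  have "2 + a - b = 1 + a - b + of_nat 1" "2 + a - c = 1 + a - c + of_nat 1" by simp_all
  hence "L \<noteq> 0" unfolding L_def using lower_nz[of 0] lower_nz[of 1] by (simp only: mult_eq_0_iff) simp
  moreover have "P1 \<noteq> 0" "P2 \<noteq> 0" "P4 \<noteq> 0" "P5 \<noteq> 0"
    unfolding P1_def P2_def P4_def P5_def x_def
    using lower_nz[of n] lower_nz[of "Suc n"] by (simp_all add: algebra_simps)
  moreover have "x + 1 = of_nat (Suc n)" unfolding x_def by simp
  hence "x + 1 \<noteq> 0" by (simp only: of_nat_eq_0_iff)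
  ultimately have identity: "(a + x) * (b + x) * (c + x) / (P1 * P2 * (x + 1)) *
      ((x + 1) * (dixon_cert_poly a b c (x + 1) / (a * S)) / (P4 * P5)) =
    x * (dixon_cert_poly a b c x / (a * S)) / (P1 * P2) +
      (a + x) * (a + x + 1) * L / (a * (P1 * P4 * P2 * P5)) * (C / (L * S)) - 1"
    using assms(1,4) unfolding P1_def P2_def P4_def P5_def L_def S_def C_def
    by (intro dixon_cert_rational_identity) simp_all
  have "dixon_cert a b c (Suc n) = dixon_term a b c n * ((a + x) * (b + x) * (c + x) / (P1 * P2 * (x + 1)) *
      ((x + 1) * (dixon_cert_poly a b c (x + 1) / (a * S)) / (P4 * P5)))"
  proof -
    have "of_nat (Suc n) = x + 1" "1 + a - b + (x + 1) = P4" "1 + a - c + (x + 1) = P5"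
      unfolding x_def P4_def P5_def by simp_all
    thus ?thesis unfolding dixon_cert_def dixon_term_Suc x_def[symmetric] P1_def[symmetric] P2_def[symmetric]
        S_def[symmetric]
      by (simp only: mult.assoc)
  qed
  moreover have "dixon_cert a b c n = dixon_term a b c n * (x * (dixon_cert_poly a b c x / (a * S)) / (P1 * P2))"
    unfolding dixon_cert_def S_def P1_def P2_def x_def by simp
  moreover have "dixon_ratio a b c * dixon_term (a + 2) b c n =
      dixon_term a b c n * ((a + x) * (a + x + 1) * L / (a * (P1 * P4 * P2 * P5)) * (C / (L * S)))"
  proof -
    have "(1 + a) * dixon_term (a + 2) b c n = dixon_term a b c n * ((a + x) * (a + x + 1) * L / (a * (P1 * P4 * P2 * P5)))"
      unfolding dixon_term_plus2[OF assms(1) l] L_def P1_def P2_def P4_def P5_def x_def by (simp add: ac_simps)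
    moreover have "dixon_ratio a b c = (1 + a) * (C / (L * S))"
      unfolding dixon_ratio_def C_def L_def S_def by simp
    ultimately show ?thesis by (metis mult.assoc mult.commute)
  qed
  ultimately show ?thesis unfolding identity by (simp add: algebra_simps)
qed

lemma dixon_cert_LIMSEQ:
  assumes "a \<noteq> 0" and l: "1 + a - b \<notin> \<int>\<^sub>\<le>\<^sub>0" "1 + a - c \<notin> \<int>\<^sub>\<le>\<^sub>0"
    and conv: "Re (a + 2 - 2 * b - 2 * c) > 0"
  shows "dixon_cert a b c \<longlonglongrightarrow> 0"
proof -
  define S where "S = a + 2 - 2 * b - 2 * c"
  define q where "q m = dixon_cert_poly a b c m / (a * S) / ((1 + a - b + m) * (1 + a - c + m))" for m
  have "S \<noteq> 0" using conv unfolding S_def by (metis less_irrefl zero_complex.sel(1))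
  have "(\<lambda>n. q (of_nat n)) \<longlonglongrightarrow> (a + a * (3 + 3 * a - 2 * b - 2 * c) * 0 + dixon_cert_poly a b c 0 * (0 * 0)) /
      (a * S * (((1 + a - b) * 0 + 1) * ((1 + a - c) * 0 + 1)))" (is "_ \<longlonglongrightarrow> ?l")
  proof -
    let ?y = "\<lambda>n. 1 / (of_nat n :: complex)"
    have "(\<lambda>n. (a + a * (3 + 3 * a - 2 * b - 2 * c) * ?y n + dixon_cert_poly a b c 0 * (?y n * ?y n)) /
        (a * S * (((1 + a - b) * ?y n + 1) * ((1 + a - c) * ?y n + 1)))) \<longlonglongrightarrow> ?l"
      using assms(1) \<open>S \<noteq> 0\<close> by (intro tendsto_intros lim_1_over_n) simp
    moreover have "\<forall>\<^sub>F n in sequentially. (a + a * (3 + 3 * a - 2 * b - 2 * c) * ?y n +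
        dixon_cert_poly a b c 0 * (?y n * ?y n)) /
        (a * S * (((1 + a - b) * ?y n + 1) * ((1 + a - c) * ?y n + 1))) = q (of_nat n)"
      using eventually_gt_at_top[of 0]
    proof eventually_elim
      case (elim n)
      define m where "m = (of_nat n :: complex)"
      have "m \<noteq> 0" using elim unfolding m_def by simp
      hence "dixon_cert_poly a b c m = m * m * (a + a * (3 + 3 * a - 2 * b - 2 * c) * (1 / m) +
          dixon_cert_poly a b c 0 * ((1 / m) * (1 / m)))"
        and "(1 + a - b + m) * (1 + a - c + m) = m * m * (((1 + a - b) * (1 / m) + 1) * ((1 + a - c) * (1 / m) + 1))"
        unfolding dixon_cert_poly_def by (simp_all add: field_simps power2_eq_square)
      thus ?case using \<open>m \<noteq> 0\<close> unfolding q_def m_def[symmetric] by simp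
    qed
    ultimately show ?thesis by (simp add: tendsto_cong)
  qed
  moreover have "(\<lambda>n. of_nat n * dixon_term a b c n) \<longlonglongrightarrow> 0"
  proof -
    have "Re ((1 + a - b) + (1 + a - c) - a - b - c) > 0" using conv by simp
    from hyp32_term_times_n_LIMSEQ[OF l this] show ?thesis unfolding dixon_term_def .
  qed
  ultimately have "(\<lambda>n. (of_nat n * dixon_term a b c n) * q (of_nat n)) \<longlonglongrightarrow> 0 * ?l"
    by (intro tendsto_mult)
  thus ?thesis unfolding dixon_cert_def[abs_def] q_def S_def by (simp add: ac_simps)
qed

lemma suminf_dixon_term_recurrence:
  assumes "a \<noteq> 0" and l: "1 + a - b \<notin> \<int>\<^sub>\<le>\<^sub>0" "1 + a - c \<notin> \<int>\<^sub>\<le>\<^sub>0"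
    and conv: "Re (a + 2 - 2 * b - 2 * c) > 0"
  shows "(\<Sum>n. dixon_term a b c n) = dixon_ratio a b c * (\<Sum>n. dixon_term (a + 2) b c n)"
proof -
  have "a + 2 - 2 * b - 2 * c \<noteq> 0" using conv by (metis less_irrefl zero_complex.sel(1))
  have "(\<lambda>n. dixon_cert a b c (Suc n) - dixon_cert a b c n) sums (0 - dixon_cert a b c 0)"
    by (rule telescope_sums[OF dixon_cert_LIMSEQ[OF assms]])
  hence telescoped: "(\<lambda>n. dixon_ratio a b c * dixon_term (a + 2) b c n - dixon_term a b c n) sums 0"
    using dixon_cert_diff[OF assms(1) l \<open>a + 2 - 2 * b - 2 * c \<noteq> 0\<close>] by (simp add: dixon_cert_def)
  have "summable (dixon_term (a + 2) b c)"
    using plus_of_nat_notin_nonpos_Ints[OF l(1), of 2] plus_of_nat_notin_nonpos_Ints[OF l(2), of 2] conv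
    by (intro summable_dixon_term) (simp_all add: algebra_simps)
  hence "(\<lambda>n. dixon_ratio a b c * dixon_term (a + 2) b c n) sums
      (dixon_ratio a b c * (\<Sum>n. dixon_term (a + 2) b c n))"
    by (intro sums_mult summable_sums)
  from sums_diff[OF this telescoped]
  have "dixon_term a b c sums (dixon_ratio a b c * (\<Sum>n. dixon_term (a + 2) b c n) - 0)" by simp
  thus ?thesis by (simp add: sums_iff)
qed

section \<open>Dixon's summation theorem\<close>

lemma suminf_dixon_term_iterate:
  assumes "a \<noteq> 0" "1 + a / 2 \<notin> \<int>\<^sub>\<le>\<^sub>0" and l: "1 + a - b \<notin> \<int>\<^sub>\<le>\<^sub>0" "1 + a - c \<notin> \<int>\<^sub>\<le>\<^sub>0"
    and conv: "Re (a + 2 - 2 * b - 2 * c) > 0"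
  shows "(\<Sum>n. dixon_term a b c n) =
    (\<Prod>j<N. dixon_ratio (a + 2 * of_nat j) b c) * (\<Sum>n. dixon_term (a + 2 * of_nat N) b c n)"
proof (induction N)
  case (Suc N)
  define a' where "a' = a + 2 * of_nat N"
  have "a' \<noteq> 0"
  proof (cases N)
    case (Suc M)
    have "a' = 2 * (1 + a / 2 + of_nat M)" unfolding a'_def Suc by (simp add: field_simps)
    thus ?thesis using plus_of_nat_neq_0[OF assms(2), of M] by (metis mult_eq_0_iff zero_neq_numeral)
  qed (use assms(1) a'_def in simp)
  moreover have "1 + a' - b \<notin> \<int>\<^sub>\<le>\<^sub>0" "1 + a' - c \<notin> \<int>\<^sub>\<le>\<^sub>0"
    using plus_of_nat_notin_nonpos_Ints[OF l(1), of "2 * N"] plus_of_nat_notin_nonpos_Ints[OF l(2), of "2 * N"]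
    unfolding a'_def by (simp_all add: algebra_simps)
  moreover have "Re (a' + 2 - 2 * b - 2 * c) > 0" using conv unfolding a'_def by simp
  ultimately have "(\<Sum>n. dixon_term a' b c n) = dixon_ratio a' b c * (\<Sum>n. dixon_term (a' + 2) b c n)"
    by (rule suminf_dixon_term_recurrence)
  moreover have "a' + 2 = a + 2 * of_nat (Suc N)" unfolding a'_def by simp
  ultimately show ?case using Suc.IH unfolding a'_def by (simp add: mult.assoc)
qed simp

lemma dixon_ratio_shift:
  "dixon_ratio (a + 2 * of_nat j) b c =
   ((1 + a) / 2 + of_nat j) * ((1 + a / 2 - b) + of_nat j) * ((1 + a / 2 - c) + of_nat j) *
     ((1 + a - b - c) / 2 + of_nat j) * ((2 + a - b - c) / 2 + of_nat j) /
   (((1 + a - b) / 2 + of_nat j) * ((2 + a - b) / 2 + of_nat j) * ((1 + a - c) / 2 + of_nat j) *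
     ((2 + a - c) / 2 + of_nat j) * ((1 + a / 2 - b - c) + of_nat j))"
proof -
  define x where "x = (of_nat j :: complex)"
  define A where "A = a + 2 * x"
  have "(1 + A) * ((2 + A - 2 * b) * (2 + A - 2 * c) * (1 + A - b - c) * (2 + A - b - c)) =
     32 * (((1 + a) / 2 + x) * ((1 + a / 2 - b) + x) * ((1 + a / 2 - c) + x) * ((1 + a - b - c) / 2 + x) *
       ((2 + a - b - c) / 2 + x))"
    and "(1 + A - b) * (2 + A - b) * (1 + A - c) * (2 + A - c) * (A + 2 - 2 * b - 2 * c) =
     32 * (((1 + a - b) / 2 + x) * ((2 + a - b) / 2 + x) * ((1 + a - c) / 2 + x) * ((2 + a - c) / 2 + x) *
       ((1 + a / 2 - b - c) + x))"
    unfolding A_def by (simp_all add: field_simps)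
  thus ?thesis unfolding dixon_ratio_def x_def[symmetric] A_def[symmetric]
    by (simp only: mult_divide_mult_cancel_left zero_neq_numeral[symmetric] not_False_eq_True)
qed

lemma prod_dixon_ratio:
  "(\<Prod>j<N. dixon_ratio (a + 2 * of_nat j) b c) =
   pochhammer ((1 + a) / 2) N * pochhammer (1 + a / 2 - b) N * pochhammer (1 + a / 2 - c) N *
     pochhammer ((1 + a - b - c) / 2) N * pochhammer ((2 + a - b - c) / 2) N /
   (pochhammer ((1 + a - b) / 2) N * pochhammer ((2 + a - b) / 2) N * pochhammer ((1 + a - c) / 2) N *
     pochhammer ((2 + a - c) / 2) N * pochhammer (1 + a / 2 - b - c) N)"
  unfolding dixon_ratio_shift prod_dividef prod.distrib
  by (simp add: pochhammer_prod atLeast0LessThan)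

lemma prod_dixon_ratio_LIMSEQ:
  assumes l: "1 + a - b \<notin> \<int>\<^sub>\<le>\<^sub>0" "1 + a - c \<notin> \<int>\<^sub>\<le>\<^sub>0" and conv: "Re (a + 2 - 2 * b - 2 * c) > 0"
  shows "(\<lambda>N. \<Prod>j<N. dixon_ratio (a + 2 * of_nat j) b c) \<longlonglongrightarrow>
    rGamma ((1 + a) / 2) * rGamma (1 + a / 2 - b) * rGamma (1 + a / 2 - c) *
      rGamma ((1 + a - b - c) / 2) * rGamma ((2 + a - b - c) / 2) /
    (rGamma ((1 + a - b) / 2) * rGamma ((2 + a - b) / 2) * rGamma ((1 + a - c) / 2) *
      rGamma ((2 + a - c) / 2) * rGamma (1 + a / 2 - b - c))"
proof -
  define as where "as = [(1 + a) / 2, 1 + a / 2 - b, 1 + a / 2 - c, (1 + a - b - c) / 2, (2 + a - b - c) / 2]"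
  define bs where "bs = [(1 + a - b) / 2, (2 + a - b) / 2, (1 + a - c) / 2, (2 + a - c) / 2, 1 + a / 2 - b - c]"
  have sums: "sum_list as = sum_list bs" unfolding as_def bs_def by (simp add: field_simps)
  have "\<forall>\<^sub>F N in sequentially. (\<Prod>j<N. dixon_ratio (a + 2 * of_nat j) b c) =
      (\<Prod>x\<leftarrow>as. rGamma_pochhammer_seq x N) / (\<Prod>x\<leftarrow>bs. rGamma_pochhammer_seq x N)"
    using eventually_gt_at_top[of 0]
  proof eventually_elim
    case (elim N)
    have "(\<Prod>x\<leftarrow>as. pochhammer x N) / (\<Prod>x\<leftarrow>bs. pochhammer x N) =
        (\<Prod>x\<leftarrow>as. rGamma_pochhammer_seq x N) / (\<Prod>x\<leftarrow>bs. rGamma_pochhammer_seq x N)"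
      using pochhammer_prod_ratio[OF _ elim, of as bs] elim unfolding sums by (simp add: as_def bs_def)
    thus ?case unfolding prod_dixon_ratio by (simp add: as_def bs_def mult_ac)
  qed
  moreover have "(\<lambda>N. (\<Prod>x\<leftarrow>as. rGamma_pochhammer_seq x N) / (\<Prod>x\<leftarrow>bs. rGamma_pochhammer_seq x N)) \<longlonglongrightarrow>
      (\<Prod>x\<leftarrow>as. rGamma x) / (\<Prod>x\<leftarrow>bs. rGamma x)"
  proof -
    have e: "(2 + a - b) / 2 = (1 + a - b + 1) / 2" "(2 + a - c) / 2 = (1 + a - c + 1) / 2" by simp_all
    have "(1 + a - b) / 2 \<notin> \<int>\<^sub>\<le>\<^sub>0" "(2 + a - b) / 2 \<notin> \<int>\<^sub>\<le>\<^sub>0" "(1 + a - c) / 2 \<notin> \<int>\<^sub>\<le>\<^sub>0" "(2 + a - c) / 2 \<notin> \<int>\<^sub>\<le>\<^sub>0"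
      unfolding e using half_notin_nonpos_Ints[OF l(1)] half_notin_nonpos_Ints[OF l(2)] by blast+
    moreover have "1 + a / 2 - b - c \<notin> \<int>\<^sub>\<le>\<^sub>0" using conv by (intro Re_pos_notin_nonpos_Ints) simp
    ultimately show ?thesis unfolding as_def bs_def
      by (simp, intro tendsto_intros rGamma_pochhammer_seq_LIMSEQ) (auto simp: rGamma_eq_zero_iff)
  qed
  ultimately show ?thesis unfolding as_def bs_def by (simp add: tendsto_cong mult_ac)
qed

lemma pochhammer_ge_0: "(x::real) \<ge> 0 \<Longrightarrow> pochhammer x n \<ge> 0"
  by (induction n) (auto simp: pochhammer_Suc)

lemma norm_pochhammer_le: "norm (pochhammer (z::complex) k) \<le> pochhammer (norm z) k"
proof (induction k)
  case (Suc k)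
  have "norm (z + of_nat k) \<le> norm z + real k" using norm_triangle_ineq[of z "of_nat k"] by simp
  hence "norm (pochhammer z k) * norm (z + of_nat k) \<le> pochhammer (norm z) k * (norm z + real k)"
    using Suc.IH by (intro mult_mono) (auto intro: pochhammer_ge_0)
  thus ?case by (simp add: pochhammer_Suc norm_mult)
qed simp

lemma norm_pochhammer_le_Re_Im:
  "Re z \<ge> 0 \<Longrightarrow> norm (pochhammer (z::complex) k) \<le> pochhammer (Re z + \<bar>Im z\<bar>) k"
proof (induction k)
  case (Suc k)
  have "norm (z + of_nat k) \<le> \<bar>Re (z + of_nat k)\<bar> + \<bar>Im (z + of_nat k)\<bar>" by (rule cmod_le)
  also have "\<dots> = Re z + \<bar>Im z\<bar> + real k" using Suc.prems by simp
  finally have "norm (pochhammer z k) * norm (z + of_nat k) \<le>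
      pochhammer (Re z + \<bar>Im z\<bar>) k * (Re z + \<bar>Im z\<bar> + real k)"
    using Suc by (intro mult_mono) (auto intro: pochhammer_ge_0)
  thus ?case by (simp add: pochhammer_Suc norm_mult)
qed simp

lemma pochhammer_Re_le_norm: "Re w > 0 \<Longrightarrow> pochhammer (Re w) k \<le> norm (pochhammer (w::complex) k)"
proof (induction k)
  case (Suc k)
  have "Re w + real k \<le> norm (w + of_nat k)" using complex_Re_le_cmod[of "w + of_nat k"] by simp
  hence "pochhammer (Re w) k * (Re w + real k) \<le> norm (pochhammer w k) * norm (w + of_nat k)"
    using Suc by (intro mult_mono) (auto intro: pochhammer_ge_0)
  thus ?case by (simp add: pochhammer_Suc norm_mult)
qed simp

lemma norm_dixon_term_le:
  assumes "Re x \<ge> 0" "Re x + (1 - Re b) > 0" "Re x + (1 - Re c) > 0"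
  shows "norm (dixon_term x b c k) \<le>
    hyp32_term (Re x + \<bar>Im x\<bar>) (norm b) (norm c) (Re x + (1 - Re b)) (Re x + (1 - Re c)) k"
proof -
  have Re_lower: "Re (1 + x - b) = Re x + (1 - Re b)" "Re (1 + x - c) = Re x + (1 - Re c)" by simp_all
  have pos: "pochhammer (Re x + (1 - Re b)) k > 0" "pochhammer (Re x + (1 - Re c)) k > 0"
    using assms by (auto intro: pochhammer_pos)
  have "norm (dixon_term x b c k) = norm (pochhammer x k) * norm (pochhammer b k) * norm (pochhammer c k) /
      (norm (pochhammer (1 + x - b) k) * norm (pochhammer (1 + x - c) k) * fact k)"
    unfolding dixon_term_def hyp32_term_def by (simp add: norm_mult norm_divide)
  also have "\<dots> \<le> hyp32_term (Re x + \<bar>Im x\<bar>) (norm b) (norm c) (Re x + (1 - Re b)) (Re x + (1 - Re c)) k"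
    unfolding hyp32_term_def
  proof (rule frac_le)
    show "norm (pochhammer x k) * norm (pochhammer b k) * norm (pochhammer c k) \<le>
        pochhammer (Re x + \<bar>Im x\<bar>) k * pochhammer (norm b) k * pochhammer (norm c) k"
      using assms(1) by (intro mult_mono norm_pochhammer_le norm_pochhammer_le_Re_Im)
        (auto intro!: mult_nonneg_nonneg pochhammer_ge_0)
    show "pochhammer (Re x + (1 - Re b)) k * pochhammer (Re x + (1 - Re c)) k * fact k \<le>
        norm (pochhammer (1 + x - b) k) * norm (pochhammer (1 + x - c) k) * fact k"
      using pochhammer_Re_le_norm[of "1 + x - b" k] pochhammer_Re_le_norm[of "1 + x - c" k] assms pos
      unfolding Re_lower by (intro mult_right_mono mult_mono) auto
  qed (use assms pos in \<open>auto intro!: mult_nonneg_nonneg pochhammer_ge_0\<close>)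
  finally show ?thesis .
qed

lemma hyp32_term_shift_eq_prod:
  "hyp32_term (u + m) B C (u + \<beta>) (u + \<gamma>) k =
    (\<Prod>j<k. (u + real j + m) / ((u + real j + \<beta>) * (u + real j + \<gamma>))) *
    (pochhammer B k * pochhammer C k / fact k)"
proof -
  have "(\<Prod>j<k. (u + real j + m) / ((u + real j + \<beta>) * (u + real j + \<gamma>))) =
      pochhammer (u + m) k / (pochhammer (u + \<beta>) k * pochhammer (u + \<gamma>) k)"
    unfolding prod_dividef prod.distrib by (simp add: pochhammer_prod atLeast0LessThan add_ac)
  thus ?thesis unfolding hyp32_term_def by (simp add: mult_ac)
qed

lemma shift_factor_antimono:
  fixes m \<beta> \<gamma> v v' :: real
  assumes m: "m \<ge> 0" and v: "1 + \<bar>\<beta>\<bar> + \<bar>\<gamma>\<bar> + \<bar>\<beta> * \<gamma>\<bar> + m * \<bar>\<beta> + \<gamma>\<bar> \<le> v" and "v \<le> v'"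
  shows "0 \<le> (v' + m) / ((v' + \<beta>) * (v' + \<gamma>))"
    and "(v' + m) / ((v' + \<beta>) * (v' + \<gamma>)) \<le> (v + m) / ((v + \<beta>) * (v + \<gamma>))"
proof -
  have ge1: "v + \<beta> \<ge> 1" "v + \<gamma> \<ge> 1" "v' + \<beta> \<ge> 1" "v' + \<gamma> \<ge> 1" "v \<ge> 1"
    using v \<open>v \<le> v'\<close> abs_ge_self[of \<beta>] abs_ge_minus_self[of \<beta>] abs_ge_self[of \<gamma>] abs_ge_minus_self[of \<gamma>]
      abs_ge_zero[of "\<beta> * \<gamma>"] mult_nonneg_nonneg[OF m abs_ge_zero[of "\<beta> + \<gamma>"]] by linarith+
  show "0 \<le> (v' + m) / ((v' + \<beta>) * (v' + \<gamma>))" using ge1 m \<open>v \<le> v'\<close> by simp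
  have "v * v' \<ge> v" using ge1 \<open>v \<le> v'\<close> by (metis mult_left_mono mult.right_neutral order.trans zero_le_one)
  moreover have "m * (\<beta> + \<gamma>) \<ge> - (m * \<bar>\<beta> + \<gamma>\<bar>)"
    using mult_left_mono[OF abs_ge_minus_self[of "\<beta> + \<gamma>"] m] by (simp add: algebra_simps)
  moreover have "m * (v + v') \<ge> 0" using m ge1 \<open>v \<le> v'\<close> by simp
  ultimately have "v * v' + m * (v + v') + m * (\<beta> + \<gamma>) - \<beta> * \<gamma> \<ge> 0"
    using v abs_ge_self[of "\<beta> * \<gamma>"] by linarith
  hence "(v' - v) * (v * v' + m * (v + v') + m * (\<beta> + \<gamma>) - \<beta> * \<gamma>) \<ge> 0"
    using \<open>v \<le> v'\<close> by simp
  moreover have "(v + m) * ((v' + \<beta>) * (v' + \<gamma>)) - (v' + m) * ((v + \<beta>) * (v + \<gamma>)) =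
      (v' - v) * (v * v' + m * (v + v') + m * (\<beta> + \<gamma>) - \<beta> * \<gamma>)"
    by (simp add: algebra_simps)
  ultimately have "(v' + m) * ((v + \<beta>) * (v + \<gamma>)) \<le> (v + m) * ((v' + \<beta>) * (v' + \<gamma>))"
    by linarith
  moreover have "(v + \<beta>) * (v + \<gamma>) > 0" "(v' + \<beta>) * (v' + \<gamma>) > 0" using ge1 by simp_all
  ultimately show "(v' + m) / ((v' + \<beta>) * (v' + \<gamma>)) \<le> (v + m) / ((v + \<beta>) * (v + \<gamma>))"
    by (simp add: divide_simps)
qed

lemma hyp32_term_shift_antimono:
  fixes u u0 m B C \<beta> \<gamma> :: real
  assumes "m \<ge> 0" "B \<ge> 0" "C \<ge> 0"
    and u0: "1 + \<bar>\<beta>\<bar> + \<bar>\<gamma>\<bar> + \<bar>\<beta> * \<gamma>\<bar> + m * \<bar>\<beta> + \<gamma>\<bar> \<le> u0" and "u0 \<le> u"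
  shows "hyp32_term (u + m) B C (u + \<beta>) (u + \<gamma>) k \<le> hyp32_term (u0 + m) B C (u0 + \<beta>) (u0 + \<gamma>) k"
proof -
  have "(\<Prod>j<k. (u + real j + m) / ((u + real j + \<beta>) * (u + real j + \<gamma>))) \<le>
      (\<Prod>j<k. (u0 + real j + m) / ((u0 + real j + \<beta>) * (u0 + real j + \<gamma>)))"
  proof (rule prod_mono, rule conjI)
    fix j
    have "1 + \<bar>\<beta>\<bar> + \<bar>\<gamma>\<bar> + \<bar>\<beta> * \<gamma>\<bar> + m * \<bar>\<beta> + \<gamma>\<bar> \<le> u0 + real j" using u0 by simp
    moreover have "u0 + real j \<le> u + real j" using \<open>u0 \<le> u\<close> by simp
    ultimately show "0 \<le> (u + real j + m) / ((u + real j + \<beta>) * (u + real j + \<gamma>))"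
      and "(u + real j + m) / ((u + real j + \<beta>) * (u + real j + \<gamma>)) \<le>
        (u0 + real j + m) / ((u0 + real j + \<beta>) * (u0 + real j + \<gamma>))"
      using shift_factor_antimono[OF assms(1)] by blast+
  qed
  moreover have "pochhammer B k * pochhammer C k / fact k \<ge> 0"
    using assms(2,3) by (intro divide_nonneg_pos mult_nonneg_nonneg pochhammer_ge_0) auto
  ultimately show ?thesis unfolding hyp32_term_shift_eq_prod by (rule mult_right_mono)
qed

lemma summable_hyp32_term_real:
  fixes a1 a2 a3 b1 b2 :: real
  assumes "a1 \<ge> 0" "a2 \<ge> 0" "a3 \<ge> 0" "b1 > 0" "b2 > 0" "b1 + b2 - a1 - a2 - a3 > 0"
  shows "summable (hyp32_term a1 a2 a3 b1 b2)"
proof -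
  have "of_real b1 \<notin> (\<int>\<^sub>\<le>\<^sub>0 :: complex set)" "of_real b2 \<notin> (\<int>\<^sub>\<le>\<^sub>0 :: complex set)"
    using assms by (auto intro!: Re_pos_notin_nonpos_Ints)
  from summable_norm_hyp32_term[OF this, of "of_real a1" "of_real a2" "of_real a3"] assms(6)
  have "summable (\<lambda>k. norm (of_real (hyp32_term a1 a2 a3 b1 b2 k) :: complex))"
    by (simp add: hyp32_term_of_real)
  moreover have "hyp32_term a1 a2 a3 b1 b2 k \<ge> 0" for k
    unfolding hyp32_term_def using assms
    by (intro divide_nonneg_pos mult_nonneg_nonneg mult_pos_pos pochhammer_ge_0 pochhammer_pos) auto
  ultimately show ?thesis by simp
qed

lemma hyp32_term_shift_LIMSEQ:
  fixes r m B C \<beta> \<gamma> :: real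
  assumes "k > 0"
  shows "(\<lambda>N. hyp32_term (r + 2 * real N + m) B C (r + 2 * real N + \<beta>) (r + 2 * real N + \<gamma>) k) \<longlonglongrightarrow> 0"
proof -
  have "(\<lambda>N. (r + 2 * real N + real j + m) / ((r + 2 * real N + real j + \<beta>) * (r + 2 * real N + real j + \<gamma>)))
      \<longlonglongrightarrow> 0" for j
    by real_asymp
  hence "(\<lambda>N. \<Prod>j<k. (r + 2 * real N + real j + m) / ((r + 2 * real N + real j + \<beta>) * (r + 2 * real N + real j + \<gamma>)))
      \<longlonglongrightarrow> (\<Prod>j<k. 0)"
    by (intro tendsto_prod)
  hence "(\<lambda>N. \<Prod>j<k. (r + 2 * real N + real j + m) / ((r + 2 * real N + real j + \<beta>) * (r + 2 * real N + real j + \<gamma>)))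
      \<longlonglongrightarrow> 0"
    using assms by (simp add: power_0_left)
  thus ?thesis unfolding hyp32_term_shift_eq_prod by (rule tendsto_mult_left_zero)
qed

lemma norm_dixon_term_shift_le:
  fixes a b c :: complex
  assumes "1 + \<bar>1 - Re b\<bar> + \<bar>1 - Re c\<bar> \<le> Re a + 2 * real N"
  shows "norm (dixon_term (a + 2 * of_nat N) b c k) \<le>
    hyp32_term (Re a + 2 * real N + \<bar>Im a\<bar>) (norm b) (norm c)
      (Re a + 2 * real N + (1 - Re b)) (Re a + 2 * real N + (1 - Re c)) k"
proof -
  have "Re (a + 2 * of_nat N) \<ge> 0" "Re (a + 2 * of_nat N) + (1 - Re b) > 0" "Re (a + 2 * of_nat N) + (1 - Re c) > 0"
    using assms by (auto simp: abs_if split: if_splits)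
  from norm_dixon_term_le[OF this, of k] show ?thesis by (simp add: add_ac)
qed

lemma eventually_shift_ge: "\<forall>\<^sub>F N in sequentially. u \<le> r + 2 * real N"
  using eventually_ge_at_top[of "nat \<lceil>\<bar>u\<bar> + \<bar>r\<bar>\<rceil>"]
  by eventually_elim (auto simp: abs_if split: if_splits)

lemma dixon_term_shift_LIMSEQ:
  "(\<lambda>N. dixon_term (a + 2 * of_nat N) b c k) \<longlonglongrightarrow> (if k = 0 then 1 else 0)"
proof (cases "k = 0")
  case False
  have "\<forall>\<^sub>F N in sequentially. norm (dixon_term (a + 2 * of_nat N) b c k) \<le>
      hyp32_term (Re a + 2 * real N + \<bar>Im a\<bar>) (norm b) (norm c)
        (Re a + 2 * real N + (1 - Re b)) (Re a + 2 * real N + (1 - Re c)) k"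
    using eventually_shift_ge by eventually_elim (rule norm_dixon_term_shift_le)
  from Lim_null_comparison[OF this hyp32_term_shift_LIMSEQ] False show ?thesis by simp
qed (simp add: dixon_term_def hyp32_term_def)

lemma dixon_term_shift_dominated:
  obtains M where "summable M"
    and "\<forall>\<^sub>F (k, N) in at_top \<times>\<^sub>F sequentially. norm (dixon_term (a + 2 * of_nat N) b c k) \<le> M k"
proof -
  define m where "m = \<bar>Im a\<bar>"
  define \<beta> where "\<beta> = 1 - Re b"
  define \<gamma> where "\<gamma> = 1 - Re c"
  define v0 where "v0 = 1 + \<bar>\<beta>\<bar> + \<bar>\<gamma>\<bar> + \<bar>\<beta> * \<gamma>\<bar> + m * \<bar>\<beta> + \<gamma>\<bar>"
  \<comment> \<open>\<open>v0\<close> is the threshold of \<open>shift_factor_antimono\<close>; the rest makes the majorant summable.\<close>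
  define u0 where "u0 = v0 + m + norm b + norm c"
  define M where "M = hyp32_term (u0 + m) (norm b) (norm c) (u0 + \<beta>) (u0 + \<gamma>)"
  have "m \<ge> 0" unfolding m_def by simp
  hence v0: "1 + \<bar>\<beta>\<bar> + \<bar>\<gamma>\<bar> \<le> v0" "v0 \<le> u0" unfolding v0_def u0_def by simp_all
  have "u0 + m \<ge> 0" "u0 + \<beta> > 0" "u0 + \<gamma> > 0" "(u0 + \<beta>) + (u0 + \<gamma>) - (u0 + m) - norm b - norm c > 0"
    using v0 \<open>m \<ge> 0\<close> norm_ge_zero[of b] norm_ge_zero[of c] abs_ge_minus_self[of \<beta>] abs_ge_minus_self[of \<gamma>]
    unfolding u0_def by linarith+
  hence "summable M" unfolding M_def by (intro summable_hyp32_term_real) auto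
  moreover have "\<forall>\<^sub>F x in at_top \<times>\<^sub>F sequentially. True \<and> u0 \<le> Re a + 2 * real (snd x)"
    by (rule eventually_prodI) (simp_all add: eventually_shift_ge)
  hence "\<forall>\<^sub>F (k, N) in at_top \<times>\<^sub>F sequentially. norm (dixon_term (a + 2 * of_nat N) b c k) \<le> M k"
  proof eventually_elim
    case (elim x)
    obtain k N where x: "x = (k, N)" by (cases x)
    have "1 + \<bar>\<beta>\<bar> + \<bar>\<gamma>\<bar> \<le> Re a + 2 * real N" using elim x v0 by simp
    hence "norm (dixon_term (a + 2 * of_nat N) b c k) \<le>
        hyp32_term (Re a + 2 * real N + m) (norm b) (norm c) (Re a + 2 * real N + \<beta>) (Re a + 2 * real N + \<gamma>) k"
      unfolding m_def \<beta>_def \<gamma>_def by (rule norm_dixon_term_shift_le)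
    also have "\<dots> \<le> M k"
      unfolding M_def using \<open>m \<ge> 0\<close> v0 elim x by (intro hyp32_term_shift_antimono) (simp_all add: v0_def)
    finally show ?case using x by simp
  qed
  ultimately show ?thesis by (rule that)
qed

lemma suminf_dixon_term_shift_LIMSEQ:
  "(\<lambda>N. \<Sum>n. dixon_term (a + 2 * of_nat N) b c n) \<longlonglongrightarrow> 1"
proof -
  obtain M where "summable M"
    and dominated: "\<forall>\<^sub>F (k, N) in at_top \<times>\<^sub>F sequentially. norm (dixon_term (a + 2 * of_nat N) b c k) \<le> M k"
    by (rule dixon_term_shift_dominated)
  have "(\<lambda>N. \<Sum>k. dixon_term (a + 2 * of_nat N) b c k) \<longlonglongrightarrow> (\<Sum>k. if k = 0 then 1 else 0)"
    using tannerys_theorem[OF dixon_term_shift_LIMSEQ dominated \<open>summable M\<close>] by simp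
  moreover have "(\<Sum>k. if k = 0 then 1 else 0 :: complex) = 1"
    using sums_single[of 0 "\<lambda>_. 1 :: complex"] by (simp add: sums_iff)
  ultimately show ?thesis by simp
qed

lemma suminf_dixon_term_rGamma:
  assumes "a \<noteq> 0" "1 + a / 2 \<notin> \<int>\<^sub>\<le>\<^sub>0" and l: "1 + a - b \<notin> \<int>\<^sub>\<le>\<^sub>0" "1 + a - c \<notin> \<int>\<^sub>\<le>\<^sub>0"
    and conv: "Re (a + 2 - 2 * b - 2 * c) > 0"
  shows "(\<Sum>n. dixon_term a b c n) =
    rGamma ((1 + a) / 2) * rGamma (1 + a / 2 - b) * rGamma (1 + a / 2 - c) *
      rGamma ((1 + a - b - c) / 2) * rGamma ((2 + a - b - c) / 2) /
    (rGamma ((1 + a - b) / 2) * rGamma ((2 + a - b) / 2) * rGamma ((1 + a - c) / 2) *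
      rGamma ((2 + a - c) / 2) * rGamma (1 + a / 2 - b - c))"
proof -
  have "(\<lambda>N. (\<Prod>j<N. dixon_ratio (a + 2 * of_nat j) b c) * (\<Sum>n. dixon_term (a + 2 * of_nat N) b c n)) \<longlonglongrightarrow>
    rGamma ((1 + a) / 2) * rGamma (1 + a / 2 - b) * rGamma (1 + a / 2 - c) *
      rGamma ((1 + a - b - c) / 2) * rGamma ((2 + a - b - c) / 2) /
    (rGamma ((1 + a - b) / 2) * rGamma ((2 + a - b) / 2) * rGamma ((1 + a - c) / 2) *
      rGamma ((2 + a - c) / 2) * rGamma (1 + a / 2 - b - c)) * 1"
    by (intro tendsto_mult prod_dixon_ratio_LIMSEQ[OF l conv] suminf_dixon_term_shift_LIMSEQ)
  thus ?thesis
    unfolding suminf_dixon_term_iterate[OF assms, symmetric] by (simp add: LIMSEQ_const_iff)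
qed

lemma hypergeom_well_poised_0: "hypergeom [0, b, c] [1 - b, 1 - c] 1 = 1"
proof -
  have "dixon_term 0 b c = (\<lambda>n. if n = 0 then 1 else 0)"
  proof
    fix n show "dixon_term 0 b c n = (if n = 0 then 1 else 0)"
      by (cases n) (simp_all add: dixon_term_def hyp32_term_def pochhammer_rec)
  qed
  thus ?thesis
    using hypergeom_well_poised_eq_suminf[of 0 b c] sums_single[of 0 "\<lambda>_. 1 :: complex"]
    by (simp add: sums_iff)
qed

lemma suminf_dixon_term_Gamma:
  assumes "a \<noteq> 0" "1 + a / 2 \<notin> \<int>\<^sub>\<le>\<^sub>0" and l: "1 + a - b \<notin> \<int>\<^sub>\<le>\<^sub>0" "1 + a - c \<notin> \<int>\<^sub>\<le>\<^sub>0"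
    and conv: "Re (a + 2 - 2 * b - 2 * c) > 0"
  shows "(\<Sum>n. dixon_term a b c n) =
    Gamma (1 + a / 2) * Gamma (1 + a - b) * Gamma (1 + a - c) * Gamma (1 + a / 2 - b - c) /
    (Gamma (1 + a) * Gamma (1 + a / 2 - b) * Gamma (1 + a / 2 - c) * Gamma (1 + a - b - c))"
proof -
  define D :: "complex \<Rightarrow> complex" where "D w = exp ((1 - w) * of_real (ln 2)) * of_real (sqrt pi)" for w
  have D_nz: "D w \<noteq> 0" for w unfolding D_def by simp
  have D_rel: "D (1 + a - b) * D (1 + a - c) = D (1 + a) * D (1 + a - b - c)"
    unfolding D_def by (simp add: mult_ac exp_add[symmetric] algebra_simps)
  have dup: "Gamma (w / 2) * Gamma (w' / 2) = D w * Gamma w" if "w' = w + 1" for w w'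
    unfolding D_def that by (rule Gamma_legendre_duplication')
  have "(\<Sum>n. dixon_term a b c n) =
      (Gamma ((1 + a - b) / 2) * Gamma ((2 + a - b) / 2)) * (Gamma ((1 + a - c) / 2) * Gamma ((2 + a - c) / 2)) *
        Gamma (1 + a / 2 - b - c) /
      (Gamma ((1 + a) / 2) * Gamma (1 + a / 2 - b) * Gamma (1 + a / 2 - c) *
        (Gamma ((1 + a - b - c) / 2) * Gamma ((2 + a - b - c) / 2)))"
    unfolding suminf_dixon_term_rGamma[OF assms] rGamma_inverse_Gamma by (simp add: field_simps)
  also have "\<dots> = (D (1 + a - b) * Gamma (1 + a - b)) * (D (1 + a - c) * Gamma (1 + a - c)) * Gamma (1 + a / 2 - b - c) /
      (Gamma ((1 + a) / 2) * Gamma (1 + a / 2 - b) * Gamma (1 + a / 2 - c) * (D (1 + a - b - c) * Gamma (1 + a - b - c)))"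
    by (subst (1 2 3) dup) simp_all
  also have "\<dots> = Gamma (1 + a / 2) * Gamma (1 + a - b) * Gamma (1 + a - c) * Gamma (1 + a / 2 - b - c) /
      ((Gamma ((1 + a) / 2) * Gamma (1 + a / 2) / D (1 + a)) * Gamma (1 + a / 2 - b) * Gamma (1 + a / 2 - c) *
        Gamma (1 + a - b - c))"
  proof (cases "Gamma ((1 + a) / 2) * Gamma (1 + a / 2 - b) * Gamma (1 + a / 2 - c) * Gamma (1 + a - b - c) = 0")
    case False
    have "Gamma (1 + a / 2) \<noteq> 0" using assms(2) by (simp add: Gamma_eq_zero_iff)
    thus ?thesis using False D_nz D_rel by (simp add: field_simps)
  qed auto
  also have "Gamma ((1 + a) / 2) * Gamma (1 + a / 2) = D (1 + a) * Gamma (1 + a)"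
  proof -
    have "1 + a / 2 = (2 + a) / 2" by (simp add: field_simps)
    thus ?thesis by (simp only:) (rule dup, simp)
  qed
  finally show ?thesis using D_nz[of "1 + a"] by simp
qed

lemma dixon_summation:
  assumes "1 + a / 2 \<notin> \<int>\<^sub>\<le>\<^sub>0" and l: "1 + a - b \<notin> \<int>\<^sub>\<le>\<^sub>0" "1 + a - c \<notin> \<int>\<^sub>\<le>\<^sub>0"
    and conv: "Re (a + 2 - 2 * b - 2 * c) > 0"
  shows "hypergeom [a, b, c] [1 + a - b, 1 + a - c] 1 =
    Gamma (1 + a / 2) * Gamma (1 + a - b) * Gamma (1 + a - c) * Gamma (1 + a / 2 - b - c) /
    (Gamma (1 + a) * Gamma (1 + a / 2 - b) * Gamma (1 + a / 2 - c) * Gamma (1 + a - b - c))"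
proof (cases "a = 0")
  case True
  have "Gamma (1 - b) \<noteq> 0" "Gamma (1 - c) \<noteq> 0" "Gamma (1 - b - c) \<noteq> 0"
    using l conv True Re_pos_notin_nonpos_Ints[of "1 - b - c"] by (auto simp: Gamma_eq_zero_iff)
  thus ?thesis using True hypergeom_well_poised_0[of b c] by simp
next
  case False
  thus ?thesis unfolding hypergeom_well_poised_eq_suminf by (rule suminf_dixon_term_Gamma[OF _ assms])
qed

section \<open>The 5F4 summation\<close>

lemma hypergeom_5_4_term_split:
  fixes f b c p :: complex
  assumes "p \<notin> \<int>\<^sub>\<le>\<^sub>0" "f - p - 1 \<notin> \<int>\<^sub>\<le>\<^sub>0"
  shows "(\<Prod>x\<leftarrow>[f - 1, b, f - p, p + 1, c]. pochhammer x n) /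
      ((\<Prod>x\<leftarrow>[f - b, p, f - p - 1, f - c]. pochhammer x n) * fact n) =
    dixon_term (f - 1) b c n * (1 + of_nat n * (of_nat n + f - 1) / (p * (f - p - 1)))"
proof -
  define q where "q = f - p - 1"
  have nz: "p \<noteq> 0" "q \<noteq> 0" "pochhammer p n \<noteq> 0" "pochhammer q n \<noteq> 0"
    using assms pochhammer_neq_0[OF assms(1)] pochhammer_neq_0[OF assms(2)] unfolding q_def by auto
  have shift: "pochhammer (z + 1) n = pochhammer z n * (z + of_nat n) / z"
    "pochhammer (1 + z) n = pochhammer z n * (z + of_nat n) / z" if "z \<noteq> 0" for z :: complex
    using that pochhammer_rec[of z n] pochhammer_Suc[of z n] by (simp_all add: eq_divide_eq mult_ac add.commute)
  have "f - p = q + 1" unfolding q_def by simp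
  hence num: "(\<Prod>x\<leftarrow>[f - 1, b, f - p, p + 1, c]. pochhammer x n) =
      (pochhammer p n * pochhammer q n) *
      (pochhammer (f - 1) n * pochhammer b n * pochhammer c n * ((p + of_nat n) * (q + of_nat n) / (p * q)))"
    using nz by (simp add: shift mult_ac)
  have den: "(\<Prod>x\<leftarrow>[f - b, p, q, f - c]. pochhammer x n) * fact n =
      (pochhammer p n * pochhammer q n) * (pochhammer (f - b) n * pochhammer (f - c) n * fact n)"
    by (simp add: mult_ac)
  have "of_nat n + f - 1 = of_nat n + (p + q)" unfolding q_def by simp
  hence "(p + of_nat n) * (q + of_nat n) / (p * q) = 1 + of_nat n * (of_nat n + f - 1) / (p * q)"
    using nz by (simp add: field_simps)
  thus ?thesis unfolding q_def[symmetric] num den mult_divide_mult_cancel_left_if dixon_term_def hyp32_term_def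
    using nz by (simp add: mult_ac)
qed

lemma dixon_term_Suc_shift:
  assumes "1 + a - b \<notin> \<int>\<^sub>\<le>\<^sub>0" "1 + a - c \<notin> \<int>\<^sub>\<le>\<^sub>0"
  shows "of_nat (Suc m) * (of_nat (Suc m) + a) * dixon_term a b c (Suc m) =
    a * (a + 1) * b * c / ((1 + a - b) * (1 + a - c)) * dixon_term (a + 2) (b + 1) (c + 1) m"
proof -
  define x where "x = (of_nat (Suc m) :: complex)"
  have "x \<noteq> 0" unfolding x_def by (simp only: of_nat_eq_0_iff)
  have pa: "pochhammer a (Suc m) * (a + x) = a * (a + 1) * pochhammer (a + 2) m"
    using pochhammer_plus2(1)[of a m] pochhammer_Suc[of a "Suc m"] unfolding x_def by simp
  have pbc: "pochhammer b (Suc m) = b * pochhammer (b + 1) m" "pochhammer c (Suc m) = c * pochhammer (c + 1) m"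
    by (simp_all add: pochhammer_rec)
  have pl: "pochhammer (1 + a - b) (Suc m) = (1 + a - b) * pochhammer (1 + (a + 2) - (b + 1)) m"
    "pochhammer (1 + a - c) (Suc m) = (1 + a - c) * pochhammer (1 + (a + 2) - (c + 1)) m"
    by (simp_all add: pochhammer_rec algebra_simps)
  have "x * (x + a) * dixon_term a b c (Suc m) =
      x * (pochhammer a (Suc m) * (a + x)) * pochhammer b (Suc m) * pochhammer c (Suc m) /
      (pochhammer (1 + a - b) (Suc m) * pochhammer (1 + a - c) (Suc m) * fact (Suc m))"
    unfolding dixon_term_def hyp32_term_def by (simp add: ac_simps)
  also have "\<dots> = x * (a * (a + 1) * pochhammer (a + 2) m) * (b * pochhammer (b + 1) m) * (c * pochhammer (c + 1) m) /
      (((1 + a - b) * pochhammer (1 + (a + 2) - (b + 1)) m) * ((1 + a - c) * pochhammer (1 + (a + 2) - (c + 1)) m) *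
       (x * fact m))"
    unfolding pa pbc pl x_def[symmetric] fact_Suc by simp
  also have "\<dots> = a * (a + 1) * b * c / ((1 + a - b) * (1 + a - c)) * dixon_term (a + 2) (b + 1) (c + 1) m"
  proof -
    have "x * (a' * pa) * (b * pb) * (c * pc) / ((l1 * ql) * (l2 * qm) * (x * F)) =
        a' * b * c / (l1 * l2) * (pa * pb * pc / (ql * qm * F))" for a' pa pb pc l1 ql l2 qm F :: complex
      using \<open>x \<noteq> 0\<close> by (simp add: field_simps)
    thus ?thesis unfolding dixon_term_def hyp32_term_def .
  qed
  finally show ?thesis unfolding x_def .
qed

lemma hypergeom_5_4_split:
  fixes f b c p :: complex
  assumes "p \<notin> \<int>\<^sub>\<le>\<^sub>0" "f - p - 1 \<notin> \<int>\<^sub>\<le>\<^sub>0" and l: "f - b \<notin> \<int>\<^sub>\<le>\<^sub>0" "f - c \<notin> \<int>\<^sub>\<le>\<^sub>0"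
    and conv: "Re (f - 2 * b - 2 * c - 1) > 0"
  shows "hypergeom [f - 1, b, f - p, p + 1, c] [f - b, p, f - p - 1, f - c] 1 =
    hypergeom [f - 1, b, c] [f - b, f - c] 1 +
    (f - 1) * f * b * c / ((f - b) * (f - c) * (p * (f - p - 1))) *
      hypergeom [f + 1, b + 1, c + 1] [f - b + 1, f - c + 1] 1"
proof -
  define \<kappa> where "\<kappa> = (f - 1) * f * b * c / ((f - b) * (f - c) * (p * (f - p - 1)))"
  define w where "w n = dixon_term (f - 1) b c n * (of_nat n * (of_nat n + f - 1) / (p * (f - p - 1)))" for n
  have lower: "1 + (f - 1) - b = f - b" "1 + (f - 1) - c = f - c"
    "1 + (f - 1 + 2) - (b + 1) = f - b + 1" "1 + (f - 1 + 2) - (c + 1) = f - c + 1" by simp_all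
  have l': "1 + (f - 1) - b \<notin> \<int>\<^sub>\<le>\<^sub>0" "1 + (f - 1) - c \<notin> \<int>\<^sub>\<le>\<^sub>0" unfolding lower using l by simp_all
  have "summable (dixon_term (f - 1) b c)"
    using l' conv by (intro summable_dixon_term) simp_all
  hence S1: "dixon_term (f - 1) b c sums hypergeom [f - 1, b, c] [f - b, f - c] 1"
    using hypergeom_well_poised_eq_suminf[of "f - 1" b c] unfolding lower by (simp add: summable_sums)
  have "summable (dixon_term (f - 1 + 2) (b + 1) (c + 1))"
    using plus_of_nat_notin_nonpos_Ints[OF l(1), of 1] plus_of_nat_notin_nonpos_Ints[OF l(2), of 1] conv
    by (intro summable_dixon_term) (simp_all add: lower add_ac)
  hence "dixon_term (f - 1 + 2) (b + 1) (c + 1) sums hypergeom [f + 1, b + 1, c + 1] [f - b + 1, f - c + 1] 1"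
    using hypergeom_well_poised_eq_suminf[of "f - 1 + 2" "b + 1" "c + 1"] unfolding lower
    by (simp add: summable_sums add_ac)
  moreover have "w (Suc m) = \<kappa> * dixon_term (f - 1 + 2) (b + 1) (c + 1) m" for m
    using dixon_term_Suc_shift[OF l', of m] unfolding w_def \<kappa>_def lower by (simp add: field_simps)
  ultimately have "(\<lambda>m. w (Suc m)) sums (\<kappa> * hypergeom [f + 1, b + 1, c + 1] [f - b + 1, f - c + 1] 1)"
    by (simp add: sums_mult)
  hence "w sums (\<kappa> * hypergeom [f + 1, b + 1, c + 1] [f - b + 1, f - c + 1] 1 + w 0)"
    by (simp only: sums_Suc_iff)
  moreover have "w 0 = 0" by (simp add: w_def)
  ultimately have "w sums (\<kappa> * hypergeom [f + 1, b + 1, c + 1] [f - b + 1, f - c + 1] 1)" by simp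
  from sums_add[OF S1 this] show ?thesis
    unfolding \<kappa>_def[symmetric] hypergeom_def hypergeom_5_4_term_split[OF assms(1,2)] power_one mult_1_right
    by (simp add: w_def sums_iff distrib_left)
qed

definition dixon_pair_factor :: "complex \<Rightarrow> complex \<Rightarrow> complex \<Rightarrow> complex" where
  "dixon_pair_factor f b c =
    Gamma (f - c) * Gamma (f / 2 + 1 / 2) * Gamma (f - b) * Gamma (f / 2 - b - c - 1 / 2) /
    (Gamma (f + 2) * Gamma (f / 2 - c + 1 / 2) * Gamma (f - b - c) * Gamma (f / 2 - b + 1 / 2))"

lemma hypergeom_dixon_minus1:
  fixes f b c :: complex
  assumes "f / 2 + 1 / 2 \<notin> \<int>\<^sub>\<le>\<^sub>0" "f - b \<notin> \<int>\<^sub>\<le>\<^sub>0" "f - c \<notin> \<int>\<^sub>\<le>\<^sub>0"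
    and conv: "Re (f - 2 * b - 2 * c - 1) > 0"
  shows "hypergeom [f - 1, b, c] [f - b, f - c] 1 = dixon_pair_factor f b c * (f * (f + 1) * (f / 2 - b - c - 1 / 2))"
proof -
  define w where "w = f / 2 - b - c - 1 / 2"
  have "Re w > 0" using conv unfolding w_def by simp
  hence "w \<noteq> 0" by auto
  have "hypergeom [f - 1, b, c] [1 + (f - 1) - b, 1 + (f - 1) - c] 1 =
      Gamma (1 + (f - 1) / 2) * Gamma (1 + (f - 1) - b) * Gamma (1 + (f - 1) - c) * Gamma (1 + (f - 1) / 2 - b - c) /
      (Gamma (1 + (f - 1)) * Gamma (1 + (f - 1) / 2 - b) * Gamma (1 + (f - 1) / 2 - c) * Gamma (1 + (f - 1) - b - c))"
    using assms by (intro dixon_summation) (simp_all add: field_simps)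
  also have "\<dots> = dixon_pair_factor f b c * (f * (f + 1) * w)"
  proof -
    have "Gamma (1 + (f - 1) / 2 - b - c) = w * Gamma w"
      by (rule Gamma_plus1_eq[OF _ \<open>w \<noteq> 0\<close>]) (simp add: w_def field_simps)
    moreover have "Gamma (1 + (f - 1)) = Gamma (f + 2) / (f * (f + 1))"
      using Gamma_eq_Gamma_plus2_div[of f] by simp
    moreover have "1 + (f - 1) / 2 = f / 2 + 1 / 2" "1 + (f - 1) / 2 - b = f / 2 - b + 1 / 2"
      "1 + (f - 1) / 2 - c = f / 2 - c + 1 / 2" by (simp_all add: field_simps)
    ultimately show ?thesis unfolding dixon_pair_factor_def w_def[symmetric] by (simp add: field_simps)
  qed
  finally show ?thesis unfolding w_def by simp
qed

lemma hypergeom_dixon_plus1: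
  fixes f b c :: complex
  assumes "f / 2 + 1 / 2 \<notin> \<int>\<^sub>\<le>\<^sub>0" and l: "f - b \<notin> \<int>\<^sub>\<le>\<^sub>0" "f - c \<notin> \<int>\<^sub>\<le>\<^sub>0"
    and conv: "Re (f - 2 * b - 2 * c - 1) > 0"
  shows "hypergeom [f + 1, b + 1, c + 1] [f - b + 1, f - c + 1] 1 =
    dixon_pair_factor f b c * ((f / 2 + 1 / 2) * (f - b) * (f - c))"
proof -
  have nz: "f / 2 + 1 / 2 \<noteq> 0" "f - b \<noteq> 0" "f - c \<noteq> 0" using assms(1) l by auto
  have "hypergeom [f + 1, b + 1, c + 1] [1 + (f + 1) - (b + 1), 1 + (f + 1) - (c + 1)] 1 =
      Gamma (1 + (f + 1) / 2) * Gamma (1 + (f + 1) - (b + 1)) * Gamma (1 + (f + 1) - (c + 1)) *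
        Gamma (1 + (f + 1) / 2 - (b + 1) - (c + 1)) /
      (Gamma (1 + (f + 1)) * Gamma (1 + (f + 1) / 2 - (b + 1)) * Gamma (1 + (f + 1) / 2 - (c + 1)) *
        Gamma (1 + (f + 1) - (b + 1) - (c + 1)))"
    using plus_of_nat_notin_nonpos_Ints[OF assms(1), of 1] plus_of_nat_notin_nonpos_Ints[OF l(1), of 1]
      plus_of_nat_notin_nonpos_Ints[OF l(2), of 1] conv
    by (intro dixon_summation) (simp_all add: field_simps)
  also have "\<dots> = dixon_pair_factor f b c * ((f / 2 + 1 / 2) * (f - b) * (f - c))"
  proof -
    have "Gamma (1 + (f + 1) / 2) = (f / 2 + 1 / 2) * Gamma (f / 2 + 1 / 2)"
      by (rule Gamma_plus1_eq[OF _ nz(1)]) (simp add: field_simps)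
    moreover have "Gamma (1 + (f + 1) - (b + 1)) = (f - b) * Gamma (f - b)"
      by (rule Gamma_plus1_eq[OF _ nz(2)]) simp
    moreover have "Gamma (1 + (f + 1) - (c + 1)) = (f - c) * Gamma (f - c)"
      by (rule Gamma_plus1_eq[OF _ nz(3)]) simp
    moreover have "Gamma (1 + (f + 1) / 2 - (b + 1) - (c + 1)) = Gamma (f / 2 - b - c - 1 / 2)"
      "Gamma (1 + (f + 1)) = Gamma (f + 2)"
      "Gamma (1 + (f + 1) / 2 - (b + 1)) = Gamma (f / 2 - b + 1 / 2)"
      "Gamma (1 + (f + 1) / 2 - (c + 1)) = Gamma (f / 2 - c + 1 / 2)"
      "Gamma (1 + (f + 1) - (b + 1) - (c + 1)) = Gamma (f - b - c)"
      by (rule arg_cong[where f = Gamma]; simp add: field_simps)+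
    ultimately show ?thesis unfolding dixon_pair_factor_def by (simp add: mult_ac)
  qed
  finally show ?thesis by (simp add: add_ac)
qed

lemma dixon_pair_factor_times_div_k:
  fixes f b c k :: complex
  assumes "k \<notin> \<int>\<^sub>\<le>\<^sub>0"
  shows "dixon_pair_factor f b c * (f * (f + 1) * (f - b - c - 1) * (f / 2 - b - 1 / 2) / k) =
    Gamma (f - c) * Gamma (f / 2 + 1 / 2) * Gamma (f - b) * Gamma (f / 2 - b - c - 1 / 2)
    / (Gamma f * Gamma (f / 2 - c + 1 / 2) * Gamma (f - b - c - 1) * Gamma (f / 2 - b - 1 / 2))
    * (Gamma k / Gamma (k + 1))"
proof -
  have frac: "N / (X * Y * Z * W) * (F * t7 * t8 / k) = N / (X / F * Y * (Z / t7) * (W / t8)) * (1 / k)"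
    for N X Y Z W F t7 t8 :: complex
    by (simp add: mult_ac)
  have Gamma_t7: "Gamma (f - b - c - 1) = Gamma (f - b - c) / (f - b - c - 1)"
    and Gamma_t8: "Gamma (f / 2 - b - 1 / 2) = Gamma (f / 2 - b + 1 / 2) / (f / 2 - b - 1 / 2)"
    by (rule Gamma_eq_Gamma_plus1_div; simp)+
  have Gamma_k: "Gamma k / Gamma (k + 1) = 1 / k"
    using assms by (auto simp: Gamma_plus1[OF assms] Gamma_eq_zero_iff)
  show ?thesis unfolding dixon_pair_factor_def Gamma_eq_Gamma_plus2_div[of f] Gamma_t7 Gamma_t8 Gamma_k
    by (rule frac)
qed

lemma combination_factor_eq_div_k:
  fixes f b c p h k :: complex
  assumes nz: "f - b \<noteq> 0" "f - c \<noteq> 0" "b \<noteq> 0"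
    and h: "p * (f - p - 1) = b * h"
    and k: "k = h * (1 + c + b - f) * (1 / 2 + b - f / 2)
                / (c * (f / 2 - 1 / 2) - h * (1 / 2 + c + b - f / 2))"
    and "k \<noteq> 0"
  shows "f * (f + 1) * (f / 2 - b - c - 1 / 2) +
      (f - 1) * f * b * c / ((f - b) * (f - c) * (p * (f - p - 1))) * (f / 2 + 1 / 2) * (f - b) * (f - c) =
    f * (f + 1) * (f - b - c - 1) * (f / 2 - b - 1 / 2) / k"
proof -
  define w where "w = f / 2 - b - c - 1 / 2"
  define U where "U = 1 + c + b - f"
  define V where "V = 1 / 2 + b - f / 2"
  define D where "D = c * (f / 2 - 1 / 2) - h * (1 / 2 + c + b - f / 2)"
  have k': "k = h * U * V / D" unfolding k U_def V_def D_def ..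
  have "h \<noteq> 0" "U \<noteq> 0" "V \<noteq> 0" "D \<noteq> 0" using \<open>k \<noteq> 0\<close> unfolding k' by auto
  have "(f - b - c - 1) * (f / 2 - b - 1 / 2) = U * V" unfolding U_def V_def by (simp add: algebra_simps)
  hence "f * (f + 1) * (f - b - c - 1) * (f / 2 - b - 1 / 2) / k = f * (f + 1) * (U * V) / (h * U * V / D)"
    unfolding k' by (simp add: mult.assoc)
  also have "\<dots> = f * (f + 1) * D / h"
    using \<open>h \<noteq> 0\<close> \<open>U \<noteq> 0\<close> \<open>V \<noteq> 0\<close> \<open>D \<noteq> 0\<close> by (simp add: field_simps)
  also have "\<dots> = f * (f + 1) * w + (f - 1) * f * c * (f + 1) / (2 * h)"
    using \<open>h \<noteq> 0\<close> unfolding D_def w_def by (simp add: field_simps)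
  also have "\<dots> = f * (f + 1) * w +
      (f - 1) * f * b * c / ((f - b) * (f - c) * (p * (f - p - 1))) * (f / 2 + 1 / 2) * (f - b) * (f - c)"
  proof -
    have cancel: "Y / (P * Q * R) * S * P * Q = Y * S / R" if "P \<noteq> 0" "Q \<noteq> 0" "R \<noteq> 0"
      for Y P Q R S :: complex
      using that by (simp add: field_simps)
    have "(f - 1) * f * b * c / ((f - b) * (f - c) * (p * (f - p - 1))) * (f / 2 + 1 / 2) * (f - b) * (f - c) =
        (f - 1) * f * b * c * (f / 2 + 1 / 2) / (b * h)"
      unfolding h by (rule cancel) (use nz \<open>h \<noteq> 0\<close> in auto)
    also have "\<dots> = (f - 1) * f * c * (f + 1) / (2 * h)"
      using nz(3) \<open>h \<noteq> 0\<close> by (simp add: field_simps)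
    finally show ?thesis by simp
  qed
  finally show ?thesis unfolding w_def by (rule sym)
qed


theorem mainTheorem8:
  fixes f a\<^sub>1 p d\<^sub>1 h k :: complex
  assumes conv: "Re (f - 2 * a\<^sub>1 - 2 * d\<^sub>1 - 1) > 0"
    and lower: "f - a\<^sub>1 \<notin> \<int>\<^sub>\<le>\<^sub>0" "p \<notin> \<int>\<^sub>\<le>\<^sub>0" "f - p - 1 \<notin> \<int>\<^sub>\<le>\<^sub>0" "f - d\<^sub>1 \<notin> \<int>\<^sub>\<le>\<^sub>0"
    and a1: "a\<^sub>1 \<noteq> 0"
    and h_def: "h = p * (f - p - 1) / a\<^sub>1"
    and den: "d\<^sub>1 * (f / 2 - 1 / 2) - h * (1 / 2 + d\<^sub>1 + a\<^sub>1 - f / 2) \<noteq> 0"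
    and k_def: "k = h * (1 + d\<^sub>1 + a\<^sub>1 - f) * (1 / 2 + a\<^sub>1 - f / 2)
                   / (d\<^sub>1 * (f / 2 - 1 / 2) - h * (1 / 2 + d\<^sub>1 + a\<^sub>1 - f / 2))"
    and k: "k \<notin> \<int>\<^sub>\<le>\<^sub>0"
    and gam: "f / 2 + 1 / 2 \<notin> \<int>\<^sub>\<le>\<^sub>0"
  shows "hypergeom [f - 1, a\<^sub>1, f - p, p + 1, d\<^sub>1] [f - a\<^sub>1, p, f - p - 1, f - d\<^sub>1] 1 =
    Gamma (f - d\<^sub>1) * Gamma (f / 2 + 1 / 2) * Gamma (f - a\<^sub>1) * Gamma (f / 2 - a\<^sub>1 - d\<^sub>1 - 1 / 2)
    / (Gamma f * Gamma (f / 2 - d\<^sub>1 + 1 / 2) * Gamma (f - a\<^sub>1 - d\<^sub>1 - 1) * Gamma (f / 2 - a\<^sub>1 - 1 / 2))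
    * (Gamma k / Gamma (k + 1))"
proof -
  define \<kappa> where "\<kappa> = (f - 1) * f * a\<^sub>1 * d\<^sub>1 / ((f - a\<^sub>1) * (f - d\<^sub>1) * (p * (f - p - 1)))"
  have "k \<noteq> 0" using k by auto
  have "p * (f - p - 1) = a\<^sub>1 * h" using h_def a1 by simp
  hence bracket: "f * (f + 1) * (f / 2 - a\<^sub>1 - d\<^sub>1 - 1 / 2) + \<kappa> * (f / 2 + 1 / 2) * (f - a\<^sub>1) * (f - d\<^sub>1) =
      f * (f + 1) * (f - a\<^sub>1 - d\<^sub>1 - 1) * (f / 2 - a\<^sub>1 - 1 / 2) / k"
    unfolding \<kappa>_def using lower(1,4) by (intro combination_factor_eq_div_k[OF _ _ a1 _ k_def \<open>k \<noteq> 0\<close>]) auto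
  have "hypergeom [f - 1, a\<^sub>1, f - p, p + 1, d\<^sub>1] [f - a\<^sub>1, p, f - p - 1, f - d\<^sub>1] 1 =
      hypergeom [f - 1, a\<^sub>1, d\<^sub>1] [f - a\<^sub>1, f - d\<^sub>1] 1 +
      \<kappa> * hypergeom [f + 1, a\<^sub>1 + 1, d\<^sub>1 + 1] [f - a\<^sub>1 + 1, f - d\<^sub>1 + 1] 1"
    unfolding \<kappa>_def by (rule hypergeom_5_4_split[OF lower(2,3,1,4) conv])
  also have "\<dots> = dixon_pair_factor f a\<^sub>1 d\<^sub>1 *
      (f * (f + 1) * (f / 2 - a\<^sub>1 - d\<^sub>1 - 1 / 2) + \<kappa> * (f / 2 + 1 / 2) * (f - a\<^sub>1) * (f - d\<^sub>1))"
    unfolding hypergeom_dixon_minus1[OF gam lower(1,4) conv] hypergeom_dixon_plus1[OF gam lower(1,4) conv]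
    by (simp add: distrib_left mult_ac)
  also have "\<dots> = Gamma (f - d\<^sub>1) * Gamma (f / 2 + 1 / 2) * Gamma (f - a\<^sub>1) * Gamma (f / 2 - a\<^sub>1 - d\<^sub>1 - 1 / 2)
      / (Gamma f * Gamma (f / 2 - d\<^sub>1 + 1 / 2) * Gamma (f - a\<^sub>1 - d\<^sub>1 - 1) * Gamma (f / 2 - a\<^sub>1 - 1 / 2))
      * (Gamma k / Gamma (k + 1))"
    unfolding bracket by (rule dixon_pair_factor_times_div_k[OF k])
  finally show ?thesis .
qed

end
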